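(* Let $X$ be a complex Banach space, $P:\mathbb{C}^n\to X$ an $m$-homogeneous tetrahedral polynomial with associated symmetric $m$-linear operator $M$, and fix $\lambda\in\mathbb{C}^n$. For every $1\le p<\infty$, \[ \big(\mathbb{E}_w\|M(\lambda w,w,\ldots,w)\|^p\big)^{1/p}\le\sqrt{em}\,\big(\mathbb{E}_{\varepsilon,w}\|M(\lambda\varepsilon w,w,\ldots,w)\|^p\big)^{1/p}. \]
   Context: $P(z)=\sum_{A\subseteq[n],|A|=m}x_Az_A$, $z_A=\prod_{k\in A}z_k$; $M$ is the unique symmetric $m$-linear map with $M(z,\dots,z)=P(z)$. $w$ is a random vector with independent Steinhaus coordinates (uniform on the unit circle), $\varepsilon$ an independent random vector with independent Rademacher coordinates; products of vectors such as $\lambda w$ and $\lambda\varepsilon w$ are coordinatewise. *)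

theory Defs
  imports "HOL-Probability.Probability"
begin

text \<open>Complex Banach spaces: the distribution has no class of complex vector spaces,
so we add a complex scalar multiplication compatible with the real one and the norm.\<close>

class complex_banach = banach +
  fixes scaleC :: "complex \<Rightarrow> 'a \<Rightarrow> 'a" (infixr "*\<^sub>C" 75)
  assumes scaleC_add_right: "a *\<^sub>C (x + y) = a *\<^sub>C x + a *\<^sub>C y"
    and scaleC_add_left: "(a + b) *\<^sub>C x = a *\<^sub>C x + b *\<^sub>C x"
    and scaleC_scaleC: "a *\<^sub>C (b *\<^sub>C x) = (a * b) *\<^sub>C x"
    and scaleC_one: "1 *\<^sub>C x = x"
    and scaleC_of_real: "complex_of_real r *\<^sub>C x = r *\<^sub>R x"
    and norm_scaleC: "norm (a *\<^sub>C x) = cmod a * norm x"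

text \<open>Vectors of \<open>\<complex>^n\<close> are functions \<open>'n \<Rightarrow> complex\<close> on a finite index type \<open>'n\<close>.\<close>

definition steinhaus :: "complex measure" where
  "steinhaus = distr (uniform_measure lborel {0..2*pi}) borel cis"

definition rademacher :: "complex measure" where
  "rademacher = measure_pmf (pmf_of_set {-1, 1})"

definition tetra_poly :: "nat \<Rightarrow> ('n::finite set \<Rightarrow> 'a::complex_banach) \<Rightarrow> ('n \<Rightarrow> complex) \<Rightarrow> 'a" where
  "tetra_poly m x z = (\<Sum>A\<in>{A. card A = m}. (\<Prod>k\<in>A. z k) *\<^sub>C x A)"

text \<open>Symmetric m-linear map on \<open>(\<complex>^n)^m\<close>; arguments are indexed by \<open>{..<m}\<close>.\<close>
definition sym_multilinear :: "nat \<Rightarrow> ((nat \<Rightarrow> ('n \<Rightarrow> complex)) \<Rightarrow> 'a::complex_banach) \<Rightarrow> bool" where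
  "sym_multilinear m M \<longleftrightarrow>
     (\<forall>u v. (\<forall>k<m. u k = v k) \<longrightarrow> M u = M v) \<and>
     (\<forall>k<m. \<forall>u a v v'. M (u(k := (\<lambda>i. a * v i + v' i))) = a *\<^sub>C M (u(k := v)) + M (u(k := v'))) \<and>
     (\<forall>\<sigma> u. \<sigma> permutes {..<m} \<longrightarrow> M (u \<circ> \<sigma>) = M u)"

end

(*
  Both M(u, z, ..., z) and the derivative DP(z)u of P at z in direction u arise as the derivative
  at t = 0 of t -> P(t u + z) = M(t u + z, ..., t u + z), which gives m M(u, z, ..., z) = DP(z)u.

  Fix c, s >= 0 with c^2 + s^2 = 1. For a sign vector eps, the point rho_eps w with coordinates
  (c + i s eps_k) w_k differs from w by unimodular factors, so it is again Steinhaus distributed.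
  Expanding DP(rho_eps w)(lam eps rho_eps w) coefficientwise and averaging over all eps in
  {-1, 1}^n, every factor c + i s eps_j averages to c while eps_k (c + i s eps_k) averages to i s,
  so the average is i s c^(m-1) DP(w)(lam w). The triangle inequality, Jensen's inequality for
  x^p, the rotation invariance of the Steinhaus measure and Fubini then give
  s c^(m-1) ||DP(w)(lam w)||_p <= ||DP(w)(lam eps w)||_p, and s^2 = 1/m makes
  s c^(m-1) >= 1 / sqrt(e m).
*)

theory Submission
  imports Defs
begin

lemma scaleC_zero_left [simp]: "0 *\<^sub>C (x::'a::complex_banach) = 0"
  using scaleC_add_left[of 0 0 x] by simp

lemma scaleC_sum_left: "(\<Sum>i\<in>I. f i) *\<^sub>C (x::'a::complex_banach) = (\<Sum>i\<in>I. f i *\<^sub>C x)"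
  by (induction I rule: infinite_finite_induct) (auto simp: scaleC_add_left)

lemma scaleC_zero_right [simp]: "a *\<^sub>C (0::'a::complex_banach) = 0"
  using scaleC_add_right[of a 0 0] by simp

lemma scaleC_sum_right: "a *\<^sub>C (\<Sum>i\<in>I. f i) = (\<Sum>i\<in>I. a *\<^sub>C (f i::'a::complex_banach))"
  by (induction I rule: infinite_finite_induct) (auto simp: scaleC_add_right)

lemma bounded_linear_scaleC_left: "bounded_linear (\<lambda>a. a *\<^sub>C (x::'a::complex_banach))"
proof (rule bounded_linear_intro[where K="norm x"])
  show "(r *\<^sub>R b) *\<^sub>C x = r *\<^sub>R (b *\<^sub>C x)" for r b
    by (simp add: scaleR_conv_of_real scaleC_scaleC[symmetric] scaleC_of_real)
qed (simp_all add: scaleC_add_left norm_scaleC)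

section \<open>Multilinear maps and the derivative of a tetrahedral polynomial\<close>

lemma sym_multilinear_linear:
  assumes "sym_multilinear m M" "k < m"
  shows "M (u(k := (\<lambda>i. a * v i + v' i))) = a *\<^sub>C M (u(k := v)) + M (u(k := v'))"
  using assms unfolding sym_multilinear_def by blast

lemma sym_multilinear_cong:
  assumes "sym_multilinear m M" "\<And>k. k < m \<Longrightarrow> u k = v k"
  shows "M u = M v"
  using assms unfolding sym_multilinear_def by blast

lemma sym_multilinear_permute:
  assumes "sym_multilinear m M" "\<sigma> permutes {..<m}"
  shows "M (u \<circ> \<sigma>) = M u"
  using assms unfolding sym_multilinear_def by blast

lemma sum_Pow_lessThan_Suc:
  "(\<Sum>S\<in>Pow {..<Suc j}. f S) = (\<Sum>S\<in>Pow {..<j}. f S) + (\<Sum>S\<in>Pow {..<j}. f (insert j S))"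
proof -
  have "inj_on (insert j) (Pow {..<j})"
    by (rule inj_onI) (metis Pow_iff insert_ident lessThan_iff less_irrefl subsetD)
  moreover have "Pow {..<j} \<inter> insert j ` Pow {..<j} = {}"
    by auto
  ultimately show ?thesis
    by (simp add: lessThan_Suc Pow_insert sum.union_disjoint sum.reindex)
qed

lemma sym_multilinear_expand:
  fixes M :: "(nat \<Rightarrow> ('n \<Rightarrow> complex)) \<Rightarrow> 'a::complex_banach"
  assumes ml: "sym_multilinear m M" and "j \<le> m"
  shows "M (\<lambda>i. if i < j then (\<lambda>l. t * u l + z l) else y i) =
     (\<Sum>S\<in>Pow {..<j}. t ^ card S *\<^sub>C M (\<lambda>i. if i \<in> S then u else if i < j then z else y i))"
  using \<open>j \<le> m\<close>
proof (induction j arbitrary: y)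
  case 0
  then show ?case by (simp add: scaleC_one)
next
  case (Suc j)
  let ?V = "\<lambda>y. \<lambda>i. if i < j then (\<lambda>l. t * u l + z l) else y i"
  let ?N = "\<lambda>y S. M (\<lambda>i. if i \<in> S then u else if i < j then z else y i)"
  have "M (\<lambda>i. if i < Suc j then (\<lambda>l. t * u l + z l) else y i) = M ((?V y)(j := (\<lambda>l. t * u l + z l)))"
    by (rule arg_cong[where f=M]) (auto simp: fun_eq_iff)
  also have "\<dots> = t *\<^sub>C M (?V (y(j := u))) + M (?V (y(j := z)))"
  proof -
    have "(?V y)(j := v) = ?V (y(j := v))" for v
      by (auto simp: fun_eq_iff)
    then show ?thesis
      using Suc.prems sym_multilinear_linear[OF ml, of j "?V y" t u z] by simp
  qed
  also have "\<dots> = (\<Sum>S\<in>Pow {..<j}. t ^ card S *\<^sub>C ?N (y(j := z)) S)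
      + (\<Sum>S\<in>Pow {..<j}. t ^ card (insert j S) *\<^sub>C ?N (y(j := u)) S)"
  proof -
    have "t ^ card (insert j S) = t * t ^ card S" if "S \<in> Pow {..<j}" for S
      using that by (subst card_insert_disjoint) (auto intro: finite_subset)
    then show ?thesis
      using Suc by (simp add: scaleC_sum_right scaleC_scaleC add.commute)
  qed
  also have "\<dots> = (\<Sum>S\<in>Pow {..<Suc j}. t ^ card S *\<^sub>C
      M (\<lambda>i. if i \<in> S then u else if i < Suc j then z else y i))"
    unfolding sum_Pow_lessThan_Suc
    by (intro arg_cong2[where f="(+)"] sum.cong refl arg_cong[where f="\<lambda>N. _ *\<^sub>C M N"])
      (auto simp: fun_eq_iff)
  finally show ?case .
qed

lemma sum_Pow_card_one:
  assumes "finite A"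
  shows "(\<Sum>B\<in>Pow A. if card B = 1 then f B else 0) = (\<Sum>k\<in>A. f {k})"
proof -
  have "(\<Sum>B\<in>Pow A. if card B = 1 then f B else 0) = (\<Sum>B\<in>(\<lambda>k. {k}) ` A. f B)"
    using assms by (subst sum.inter_filter[symmetric]) (auto simp: card_Suc_eq intro!: sum.cong)
  also have "\<dots> = (\<Sum>k\<in>A. f {k})"
    by (subst sum.reindex) (auto simp: inj_on_def)
  finally show ?thesis .
qed

lemma has_vector_derivative_sum_Pow:
  fixes f :: "'b set \<Rightarrow> 'a::complex_banach"
  assumes "finite A"
  shows "((\<lambda>t. \<Sum>B\<in>Pow A. complex_of_real t ^ card B *\<^sub>C f B) has_vector_derivative
           (\<Sum>k\<in>A. f {k})) (at 0)"
proof -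
  have "((\<lambda>t. t ^ n *\<^sub>R v) has_vector_derivative (if n = 1 then v else 0)) (at 0)" for n and v :: 'a
  proof -
    have "((\<lambda>t. t ^ n *\<^sub>R v) has_vector_derivative
        0 ^ n *\<^sub>R 0 + (of_nat n * 0 ^ (n - 1)) *\<^sub>R v) (at 0)"
      by (intro has_vector_derivative_scaleR has_vector_derivative_const)
        (auto intro!: derivative_eq_intros)
    moreover have "0 ^ n *\<^sub>R 0 + (of_nat n * 0 ^ (n - 1)) *\<^sub>R v = (if n = 1 then v else 0)"
      by (cases n) auto
    ultimately show ?thesis by simp
  qed
  then have "((\<lambda>t. \<Sum>B\<in>Pow A. t ^ card B *\<^sub>R f B) has_vector_derivative
      (\<Sum>B\<in>Pow A. if card B = 1 then f B else 0)) (at 0)"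
    by (intro has_vector_derivative_sum)
  then show ?thesis
    unfolding sum_Pow_card_one[OF assms] by (simp add: scaleC_of_real flip: of_real_power)
qed

lemma sym_multilinear_diagonal_derivative:
  fixes M :: "(nat \<Rightarrow> ('n \<Rightarrow> complex)) \<Rightarrow> 'a::complex_banach"
  assumes ml: "sym_multilinear m M"
  shows "((\<lambda>t. M (\<lambda>_ l. complex_of_real t * u l + z l)) has_vector_derivative
           of_nat m *\<^sub>C M ((\<lambda>_. z)(0 := u))) (at 0)"
proof -
  let ?N = "\<lambda>S. M (\<lambda>i. if i \<in> S then u else z)"
  have "M (\<lambda>_ l. t * u l + z l) = (\<Sum>S\<in>Pow {..<m}. t ^ card S *\<^sub>C ?N S)" for t
  proof -
    have "M (\<lambda>_ l. t * u l + z l) = M (\<lambda>i. if i < m then (\<lambda>l. t * u l + z l) else z)"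
      by (rule sym_multilinear_cong[OF ml]) simp
    also have "\<dots> = (\<Sum>S\<in>Pow {..<m}. t ^ card S *\<^sub>C
        M (\<lambda>i. if i \<in> S then u else if i < m then z else z))"
      by (rule sym_multilinear_expand[OF ml order.refl])
    also have "\<dots> = (\<Sum>S\<in>Pow {..<m}. t ^ card S *\<^sub>C ?N S)"
      by (simp cong: if_cong)
    finally show ?thesis .
  qed
  moreover have "?N {k} = M ((\<lambda>_. z)(0 := u))" if "k < m" for k
  proof -
    have "(\<lambda>i. if i \<in> {k} then u else z) = ((\<lambda>_. z)(0 := u)) \<circ> Transposition.transpose 0 k"
      by (auto simp: fun_eq_iff transpose_eq_iff)
    moreover have "Transposition.transpose 0 k permutes {..<m}"
      using that by (intro permutes_swap_id) auto
    ultimately show ?thesis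
      using sym_multilinear_permute[OF ml] by metis
  qed
  then have "(\<Sum>k<m. ?N {k}) = of_nat m *\<^sub>C M ((\<lambda>_. z)(0 := u))"
    by (induction m) (auto simp: scaleC_add_left scaleC_one)
  ultimately show ?thesis
    using has_vector_derivative_sum_Pow[of "{..<m}" ?N] by simp
qed

definition tetra_deriv ::
    "nat \<Rightarrow> ('n::finite set \<Rightarrow> 'a::complex_banach) \<Rightarrow> ('n \<Rightarrow> complex) \<Rightarrow> ('n \<Rightarrow> complex) \<Rightarrow> 'a" where
  "tetra_deriv m x z u = (\<Sum>A\<in>{A. card A = m}. (\<Sum>k\<in>A. u k * (\<Prod>j\<in>A - {k}. z j)) *\<^sub>C x A)"

lemma tetra_poly_derivative:
  "((\<lambda>t. tetra_poly m x (\<lambda>l. complex_of_real t * u l + z l)) has_vector_derivative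
     tetra_deriv m x z u) (at 0)"
proof -
  let ?c = "\<lambda>A B. ((\<Prod>l\<in>B. u l) * (\<Prod>l\<in>A - B. z l)) *\<^sub>C x A"
  have expand: "tetra_poly m x (\<lambda>l. t * u l + z l) =
      (\<Sum>A\<in>{A. card A = m}. \<Sum>B\<in>Pow A. t ^ card B *\<^sub>C ?c A B)" for t
    unfolding tetra_poly_def
    by (intro sum.cong refl)
      (simp add: prod_add prod.distrib scaleC_sum_left scaleC_scaleC mult.assoc)
  have "((\<lambda>t. \<Sum>B\<in>Pow A. complex_of_real t ^ card B *\<^sub>C ?c A B) has_vector_derivative
      (\<Sum>k\<in>A. u k * (\<Prod>j\<in>A - {k}. z j)) *\<^sub>C x A) (at 0)" for A
    using has_vector_derivative_sum_Pow[of A "?c A"] by (simp add: scaleC_sum_left)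
  then show ?thesis
    unfolding expand tetra_deriv_def by (rule has_vector_derivative_sum)
qed

lemma sym_multilinear_tetra_deriv:
  assumes "sym_multilinear m M" and "\<forall>z. M (\<lambda>_. z) = tetra_poly m x z"
  shows "of_nat m *\<^sub>C M ((\<lambda>_. z)(0 := u)) = tetra_deriv m x z u"
proof -
  have "((\<lambda>t. tetra_poly m x (\<lambda>l. complex_of_real t * u l + z l)) has_vector_derivative
      of_nat m *\<^sub>C M ((\<lambda>_. z)(0 := u))) (at 0)"
    using sym_multilinear_diagonal_derivative[OF assms(1), of u z] assms(2) by simp
  then show ?thesis
    using tetra_poly_derivative vector_derivative_unique_at by blast
qed

lemma norm_tetra_deriv_le:
  fixes x :: "'n::finite set \<Rightarrow> 'a::complex_banach"
  assumes "\<And>i. cmod (z i) = 1"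
  shows "norm (tetra_deriv m x z u) \<le> (\<Sum>A\<in>{A. card A = m}. (\<Sum>k\<in>A. cmod (u k)) * norm (x A))"
  unfolding tetra_deriv_def
proof (rule order.trans[OF norm_sum sum_mono])
  fix A :: "'n set"
  have "cmod (\<Sum>k\<in>A. u k * (\<Prod>j\<in>A - {k}. z j)) \<le> (\<Sum>k\<in>A. cmod (u k * (\<Prod>j\<in>A - {k}. z j)))"
    by (rule norm_sum)
  also have "\<dots> = (\<Sum>k\<in>A. cmod (u k))"
    using assms by (simp add: norm_mult prod_norm[symmetric])
  finally show "norm ((\<Sum>k\<in>A. u k * (\<Prod>j\<in>A - {k}. z j)) *\<^sub>C x A) \<le> (\<Sum>k\<in>A. cmod (u k)) * norm (x A)"
    by (simp add: norm_scaleC mult_right_mono)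
qed

lemma borel_measurable_tetra_deriv [measurable]:
  fixes x :: "'n::finite set \<Rightarrow> 'a::complex_banach"
  assumes [measurable]: "\<And>i. (\<lambda>y. z y i) \<in> borel_measurable N" "\<And>i. (\<lambda>y. u y i) \<in> borel_measurable N"
  shows "(\<lambda>y. tetra_deriv m x (z y) (u y)) \<in> borel_measurable N"
proof -
  let ?L = "\<lambda>c::'n set \<Rightarrow> complex. \<Sum>A\<in>{A. card A = m}. c A *\<^sub>C x A"
  have "continuous_on UNIV ?L"
    by (intro continuous_intros bounded_linear.continuous_on[OF bounded_linear_scaleC_left]
        continuous_on_product_coordinates)
  then have [measurable]: "?L \<in> borel_measurable borel"
    by (rule borel_measurable_continuous_onI)
  have [measurable]: "(\<lambda>y A. \<Sum>k\<in>A. u y k * (\<Prod>j\<in>A - {k}. z y j)) \<in> borel_measurable N"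
    by (rule measurable_coordinatewise_then_product) measurable
  show ?thesis
    unfolding tetra_deriv_def by measurable
qed

section \<open>Averaging over sign vectors\<close>

definition sign_vectors :: "('n::finite \<Rightarrow> complex) set" where
  "sign_vectors = PiE UNIV (\<lambda>_. {-1, 1})"

lemma sign_vectors_iff: "e \<in> sign_vectors \<longleftrightarrow> (\<forall>i. e i \<in> {-1, 1})"
  unfolding sign_vectors_def by (simp add: PiE_UNIV_domain Pi_iff)

lemma finite_sign_vectors: "finite sign_vectors"
  unfolding sign_vectors_def by (intro finite_PiE) auto

lemma card_sign_vectors: "card (sign_vectors :: ('n::finite \<Rightarrow> complex) set) = 2 ^ CARD('n)"
  unfolding sign_vectors_def by (subst card_PiE) (auto simp: numeral_2_eq_2)

lemma sum_sign_vectors_prod: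
  fixes H :: "'n::finite \<Rightarrow> complex \<Rightarrow> 'a::comm_semiring_1"
  shows "(\<Sum>e\<in>sign_vectors. \<Prod>j\<in>UNIV. H j (e j)) = (\<Prod>j\<in>UNIV. H j (-1) + H j (1::complex))"
proof -
  have "(\<Prod>j\<in>UNIV. H j (-1) + H j 1) = (\<Prod>j\<in>UNIV. \<Sum>t\<in>{-1, 1::complex}. H j t)"
    by simp
  also have "\<dots> = (\<Sum>e\<in>sign_vectors. \<Prod>j\<in>UNIV. H j (e j))"
    unfolding sign_vectors_def by (rule prod_sum_PiE[where B="\<lambda>_. {-1, 1}" and f=H]) auto
  finally show ?thesis by simp
qed

definition rotation_factor :: "real \<Rightarrow> real \<Rightarrow> complex \<Rightarrow> complex" where
  "rotation_factor c s t = complex_of_real c + \<i> * complex_of_real s * t"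

definition sign_rotation :: "real \<Rightarrow> real \<Rightarrow> ('n \<Rightarrow> complex) \<Rightarrow> ('n \<Rightarrow> complex) \<Rightarrow> 'n \<Rightarrow> complex" where
  "sign_rotation c s e w i = rotation_factor c s (e i) * w i"

lemma norm_rotation_factor:
  assumes "c\<^sup>2 + s\<^sup>2 = 1" "t \<in> {-1, 1}"
  shows "cmod (rotation_factor c s t) = 1"
  using assms by (auto simp: rotation_factor_def cmod_def)

lemma sum_sign_vectors_rotation_coeff:
  fixes A :: "'n::finite set"
  assumes "k \<in> A"
  shows "(\<Sum>e\<in>sign_vectors. e k * (\<Prod>j\<in>A. rotation_factor c s (e j)))
       = 2 ^ CARD('n) * (\<i> * complex_of_real s * complex_of_real c ^ (card A - 1))"
proof -
  define H where "H j t = (if j \<in> A then (if j = k then t else 1) * rotation_factor c s t else 1)"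
    for j and t :: complex
  define g where "g j = (if j \<in> A then if j = k then \<i> * s else complex_of_real c else 1)" for j
  have "e k * (\<Prod>j\<in>A. rotation_factor c s (e j)) = (\<Prod>j\<in>UNIV. H j (e j))" for e
    using assms by (simp add: H_def prod.If_cases Int_absorb1 prod.remove[of A k] if_distrib)
  then have "(\<Sum>e\<in>sign_vectors. e k * (\<Prod>j\<in>A. rotation_factor c s (e j)))
      = (\<Prod>j\<in>UNIV. H j (-1) + H j 1)"
    by (simp add: sum_sign_vectors_prod)
  also have "\<dots> = (\<Prod>j\<in>UNIV. 2 * g j)"
    by (intro prod.cong refl) (simp add: H_def g_def rotation_factor_def algebra_simps)
  also have "\<dots> = 2 ^ CARD('n) * (\<Prod>j\<in>A. if j = k then \<i> * s else complex_of_real c)"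
    by (simp add: prod.distrib g_def prod.If_cases Int_absorb1)
  also have "\<dots> = 2 ^ CARD('n) * (\<i> * s * c ^ (card A - 1))"
    using assms by (simp add: prod.remove[of A k] card_Diff_singleton)
  finally show ?thesis by simp
qed

lemma sum_sign_vectors_tetra_deriv:
  fixes x :: "'n::finite set \<Rightarrow> 'a::complex_banach"
  shows "(\<Sum>e\<in>sign_vectors. tetra_deriv m x (sign_rotation c s e w)
            (\<lambda>i. lam i * e i * sign_rotation c s e w i))
       = (2 ^ CARD('n) * (\<i> * complex_of_real s * complex_of_real c ^ (m - 1))) *\<^sub>C
           tetra_deriv m x w (\<lambda>i. lam i * w i)"
proof -
  let ?\<kappa> = "2 ^ CARD('n) * (\<i> * complex_of_real s * complex_of_real c ^ (m - 1))"
  have coeff: "(\<Sum>e\<in>sign_vectors. \<Sum>k\<in>A. lam k * e k * sign_rotation c s e w k *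
          (\<Prod>j\<in>A - {k}. sign_rotation c s e w j))
      = (\<Sum>k\<in>A. lam k * w k * (\<Prod>j\<in>A - {k}. w j)) * ?\<kappa>" if "card A = m" for A
  proof -
    have term_eq: "lam k * e k * sign_rotation c s e w k * (\<Prod>j\<in>A - {k}. sign_rotation c s e w j)
        = (lam k * w k * (\<Prod>j\<in>A - {k}. w j)) * (e k * (\<Prod>j\<in>A. rotation_factor c s (e j)))" if "k \<in> A" for k e
      using that by (simp add: sign_rotation_def prod.distrib prod.remove[of A k] mult_ac)
    have "(\<Sum>e\<in>sign_vectors. \<Sum>k\<in>A. lam k * e k * sign_rotation c s e w k *
          (\<Prod>j\<in>A - {k}. sign_rotation c s e w j))
        = (\<Sum>e\<in>sign_vectors. \<Sum>k\<in>A. (lam k * w k * (\<Prod>j\<in>A - {k}. w j)) *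
            (e k * (\<Prod>j\<in>A. rotation_factor c s (e j))))"
      by (intro sum.cong refl term_eq)
    also have "\<dots> = (\<Sum>k\<in>A. lam k * w k * (\<Prod>j\<in>A - {k}. w j) *
            (\<Sum>e\<in>sign_vectors. e k * (\<Prod>j\<in>A. rotation_factor c s (e j))))"
      by (simp only: sum.swap[of _ sign_vectors] sum_distrib_left)
    also have "\<dots> = (\<Sum>k\<in>A. lam k * w k * (\<Prod>j\<in>A - {k}. w j) * ?\<kappa>)"
      using \<open>card A = m\<close> by (simp add: sum_sign_vectors_rotation_coeff)
    finally show ?thesis
      by (simp only: sum_distrib_right)
  qed
  have "(\<Sum>e\<in>sign_vectors. tetra_deriv m x (sign_rotation c s e w)
            (\<lambda>i. lam i * e i * sign_rotation c s e w i))
      = (\<Sum>A\<in>{A. card A = m}. (\<Sum>e\<in>sign_vectors. \<Sum>k\<in>A. lam k * e k * sign_rotation c s e w k *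
          (\<Prod>j\<in>A - {k}. sign_rotation c s e w j)) *\<^sub>C x A)"
    unfolding tetra_deriv_def by (simp only: sum.swap[of _ sign_vectors] scaleC_sum_left)
  also have "\<dots> = (\<Sum>A\<in>{A. card A = m}.
      ((\<Sum>k\<in>A. lam k * w k * (\<Prod>j\<in>A - {k}. w j)) * ?\<kappa>) *\<^sub>C x A)"
    by (intro sum.cong refl) (simp add: coeff)
  also have "\<dots> = ?\<kappa> *\<^sub>C tetra_deriv m x w (\<lambda>i. lam i * w i)"
    unfolding tetra_deriv_def by (simp add: scaleC_sum_right scaleC_scaleC mult.commute)
  finally show ?thesis .
qed

lemma convex_on_powr_nonneg:
  assumes "1 \<le> p"
  shows "convex_on {0::real..} (\<lambda>x. x powr p)"
proof (rule convex_onI)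
  fix t x y :: real
  assume t: "0 < t" "t < 1" and xy: "x \<in> {0..}" "y \<in> {0..}"
  have shrink: "(a * b) powr p \<le> a * b powr p" if "0 \<le> a" "a \<le> 1" "0 \<le> b" for a b :: real
  proof -
    have "a powr p \<le> a"
      using powr_mono'[of 1 p a] that assms by (cases "a = 0") auto
    then show ?thesis
      using that by (simp add: powr_mult mult_right_mono)
  qed
  show "((1 - t) *\<^sub>R x + t *\<^sub>R y) powr p \<le> (1 - t) * x powr p + t * y powr p"
  proof (cases "x = 0 \<or> y = 0")
    case True
    then show ?thesis
      using t xy shrink[of t y] shrink[of "1 - t" x] by auto
  next
    case False
    then show ?thesis
      using xy t convex_onD[OF powr_convex[OF assms], of t x y] by simp
  qed
qed simp

lemma powr_mean_le_mean_powr: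
  fixes a :: "'b \<Rightarrow> real"
  assumes "finite E" "E \<noteq> {}" "1 \<le> p" "\<And>e. e \<in> E \<Longrightarrow> 0 \<le> a e"
  shows "((\<Sum>e\<in>E. a e) / card E) powr p \<le> (\<Sum>e\<in>E. a e powr p) / card E"
proof -
  have "(\<Sum>e\<in>E. (1 / card E) *\<^sub>R a e) powr p \<le> (\<Sum>e\<in>E. (1 / card E) * a e powr p)"
    using assms by (intro convex_on_sum[OF _ _ convex_on_powr_nonneg]) (auto simp: card_gt_0_iff)
  then show ?thesis by (simp add: sum_divide_distrib)
qed

lemma tetra_deriv_powr_le_sign_average:
  fixes x :: "'n::finite set \<Rightarrow> 'a::complex_banach"
  assumes "1 \<le> p" "0 \<le> s" "0 \<le> c"
  shows "(s * c ^ (m - 1) * norm (tetra_deriv m x w (\<lambda>i. lam i * w i))) powr p \<le>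
    (\<Sum>e\<in>sign_vectors. norm (tetra_deriv m x (sign_rotation c s e w)
        (\<lambda>i. lam i * e i * sign_rotation c s e w i)) powr p) / 2 ^ CARD('n)"
proof -
  let ?D = "\<lambda>e. tetra_deriv m x (sign_rotation c s e w) (\<lambda>i. lam i * e i * sign_rotation c s e w i)"
  let ?card = "real (card (sign_vectors :: ('n \<Rightarrow> complex) set))"
  have "s * c ^ (m - 1) * norm (tetra_deriv m x w (\<lambda>i. lam i * w i)) = norm (\<Sum>e\<in>sign_vectors. ?D e) / ?card"
    using assms by (simp add: sum_sign_vectors_tetra_deriv norm_scaleC norm_mult norm_power card_sign_vectors)
  also have "\<dots> \<le> (\<Sum>e\<in>sign_vectors. norm (?D e)) / ?card"
    by (intro divide_right_mono norm_sum) simp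
  finally have "(s * c ^ (m - 1) * norm (tetra_deriv m x w (\<lambda>i. lam i * w i))) powr p
      \<le> ((\<Sum>e\<in>sign_vectors. norm (?D e)) / ?card) powr p"
    using assms by (intro powr_mono2) auto
  also have "\<dots> \<le> (\<Sum>e\<in>sign_vectors. norm (?D e) powr p) / ?card"
    using assms finite_sign_vectors card_sign_vectors[where 'n='n]
    by (intro powr_mean_le_mean_powr) auto
  finally show ?thesis
    by (simp add: card_sign_vectors)
qed

section \<open>Steinhaus and Rademacher vectors\<close>

lemma borel_measurable_cis [measurable]: "cis \<in> borel_measurable borel"
  by (intro borel_measurable_continuous_onI continuous_intros)

lemma space_steinhaus [simp]: "space steinhaus = UNIV"
  by (simp add: steinhaus_def)

lemma sets_steinhaus [simp, measurable_cong]: "sets steinhaus = sets borel"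
  by (simp add: steinhaus_def)

lemma prob_space_steinhaus: "prob_space steinhaus"
  unfolding steinhaus_def
  by (intro prob_space.prob_space_distr prob_space_uniform_measure) auto

lemma AE_steinhaus_norm: "AE z in steinhaus. cmod z = 1"
  unfolding steinhaus_def by (subst AE_distr_iff) auto

lemma nn_integral_steinhaus:
  assumes [measurable]: "f \<in> borel_measurable borel"
  shows "(\<integral>\<^sup>+ z. f z \<partial>steinhaus) =
    (\<integral>\<^sup>+ t. f (cis t) * indicator {0..2*pi} t \<partial>lborel) / emeasure lborel {0..2*pi}"
  unfolding steinhaus_def
  by (subst nn_integral_distr) (auto simp: nn_integral_uniform_measure)

lemma nn_integral_periodic_shift:
  fixes h :: "real \<Rightarrow> ennreal"
  assumes [measurable]: "h \<in> borel_measurable borel"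
    and periodic: "\<And>t. h (t + 2 * pi) = h t" and "0 \<le> a" "a \<le> 2 * pi"
  shows "(\<integral>\<^sup>+ t. h (a + t) * indicator {0..2*pi} t \<partial>lborel) =
    (\<integral>\<^sup>+ t. h t * indicator {0..2*pi} t \<partial>lborel)"
proof -
  have "(\<integral>\<^sup>+ t. h (a + t) * indicator {0..2*pi} t \<partial>lborel) =
      (\<integral>\<^sup>+ t. h t * indicator {a..a+2*pi} t \<partial>lborel)"
    using nn_integral_real_affine[of "\<lambda>t. h t * indicator {a..a+2*pi} t" 1 a]
    by (simp add: indicator_def)
  also have "\<dots> = (\<integral>\<^sup>+ t. h t * indicator {a<..2*pi} t + h t * indicator {2*pi<..a+2*pi} t \<partial>lborel)"
    using AE_lborel_singleton[of a] assms(3,4)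
    by (intro nn_integral_cong_AE) (auto elim!: eventually_mono simp: indicator_def)
  also have "\<dots> = (\<integral>\<^sup>+ t. h t * indicator {a<..2*pi} t \<partial>lborel) +
      (\<integral>\<^sup>+ t. h t * indicator {2*pi<..a+2*pi} t \<partial>lborel)"
    by (rule nn_integral_add) auto
  also have "(\<integral>\<^sup>+ t. h t * indicator {2*pi<..a+2*pi} t \<partial>lborel) =
      (\<integral>\<^sup>+ t. h t * indicator {0<..a} t \<partial>lborel)"
    using nn_integral_real_affine[of "\<lambda>t. h t * indicator {2*pi<..a+2*pi} t" 1 "2 * pi"] periodic
    by (simp add: indicator_def add.commute)
  also have "(\<integral>\<^sup>+ t. h t * indicator {a<..2*pi} t \<partial>lborel) + \<dots> =
      (\<integral>\<^sup>+ t. h t * indicator {a<..2*pi} t + h t * indicator {0<..a} t \<partial>lborel)"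
    by (rule nn_integral_add[symmetric]) auto
  also have "\<dots> = (\<integral>\<^sup>+ t. h t * indicator {0..2*pi} t \<partial>lborel)"
    using AE_lborel_singleton[of 0] assms(3,4)
    by (intro nn_integral_cong_AE) (auto elim!: eventually_mono simp: indicator_def)
  finally show ?thesis .
qed

lemma distr_steinhaus_mult_cis:
  assumes "0 \<le> a" "a \<le> 2 * pi"
  shows "distr steinhaus borel (\<lambda>z. cis a * z) = steinhaus"
proof (rule measure_eqI)
  fix A assume "A \<in> sets (distr steinhaus borel (\<lambda>z. cis a * z))"
  then have [measurable]: "A \<in> sets borel" by simp
  have "cis (t + 2 * pi) = cis t" for t
    by (simp add: complex_eq_iff)
  then have periodic: "indicator A (cis (t + 2 * pi)) = indicator A (cis t)" for t
    by simp
  have shift: "(\<integral>\<^sup>+ t. indicator A (cis (a + t)) * indicator {0..2*pi} t \<partial>lborel) =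
      (\<integral>\<^sup>+ t. indicator A (cis t) * indicator {0..2*pi} t \<partial>lborel)"
    by (rule nn_integral_periodic_shift[where h="\<lambda>t. indicator A (cis t)", OF _ periodic assms])
      measurable
  have "emeasure (distr steinhaus borel (\<lambda>z. cis a * z)) A =
      (\<integral>\<^sup>+ z. indicator A z \<partial>distr steinhaus borel (\<lambda>z. cis a * z))"
    by simp
  also have "\<dots> = (\<integral>\<^sup>+ z. indicator A (cis a * z) \<partial>steinhaus)"
    by (subst nn_integral_distr) auto
  also have "\<dots> = (\<integral>\<^sup>+ t. indicator A (cis (a + t)) * indicator {0..2*pi} t \<partial>lborel) / emeasure lborel {0..2*pi}"
    by (subst nn_integral_steinhaus) (auto simp: cis_mult)
  also have "\<dots> = (\<integral>\<^sup>+ t. indicator A (cis t) * indicator {0..2*pi} t \<partial>lborel) / emeasure lborel {0..2*pi}"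
    by (simp only: shift)
  also have "\<dots> = emeasure steinhaus A"
    using nn_integral_steinhaus[of "indicator A"] by simp
  finally show "emeasure (distr steinhaus borel (\<lambda>z. cis a * z)) A = emeasure steinhaus A" .
qed simp

lemma distr_steinhaus_mult:
  assumes "cmod b = 1"
  shows "distr steinhaus borel (\<lambda>z. b * z) = steinhaus"
proof -
  obtain a where a: "b = cis a" "- pi < a" "a \<le> pi"
  proof
    have "b \<noteq> 0"
      using assms by auto
    then show "b = cis (Arg b)"
      using assms cis_Arg[of b] by (simp add: sgn_div_norm)
  qed (use Arg_bounded[of b] in auto)
  show ?thesis
  proof (cases "0 \<le> a")
    case True
    then show ?thesis using a distr_steinhaus_mult_cis[of a] by simp
  next
    case False
    have "cis (a + 2 * pi) = b"
      using a by (simp add: complex_eq_iff)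
    then show ?thesis using a False distr_steinhaus_mult_cis[of "a + 2 * pi"] by simp
  qed
qed

lemma prob_space_rademacher: "prob_space rademacher"
  unfolding rademacher_def by (rule measure_pmf.prob_space_axioms)

lemma sets_rademacher [simp]: "sets rademacher = UNIV"
  unfolding rademacher_def by simp

lemma space_rademacher [simp]: "space rademacher = UNIV"
  unfolding rademacher_def by simp

abbreviation steinhaus_vec :: "('n::finite \<Rightarrow> complex) measure" where
  "steinhaus_vec \<equiv> PiM UNIV (\<lambda>_. steinhaus)"

abbreviation rademacher_vec :: "('n::finite \<Rightarrow> complex) measure" where
  "rademacher_vec \<equiv> PiM UNIV (\<lambda>_. rademacher)"

lemma distr_steinhaus_vec_mult:
  fixes b :: "'n::finite \<Rightarrow> complex"
  assumes b: "\<And>i. cmod (b i) = 1"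
  shows "distr steinhaus_vec steinhaus_vec (\<lambda>w i. b i * w i) = steinhaus_vec"
proof -
  interpret S: product_prob_space "\<lambda>_::'n. steinhaus"
    by (intro product_prob_spaceI prob_space_steinhaus)
  let ?S = "steinhaus_vec :: ('n \<Rightarrow> complex) measure"
  have meas: "(\<lambda>w i. b i * w i) \<in> ?S \<rightarrow>\<^sub>M ?S"
    by (rule measurable_PiM_single') (auto simp: space_PiM)
  show ?thesis
  proof (rule S.PiM_eqI)
    fix A :: "'n \<Rightarrow> complex set"
    assume A: "\<And>i. i \<in> UNIV \<Longrightarrow> A i \<in> sets steinhaus"
    then have [measurable]: "A i \<in> sets borel" for i
      by simp
    have "(\<lambda>w i. b i * w i) -` PiE UNIV A \<inter> space ?S = PiE UNIV (\<lambda>i. (\<lambda>z. b i * z) -` A i \<inter> space steinhaus)"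
      by (auto simp: space_PiM PiE_def Pi_def extensional_def)
    moreover have "(\<lambda>z. b i * z) -` A i \<inter> space steinhaus \<in> sets steinhaus" for i
      by (rule measurable_sets[of _ steinhaus borel]) auto
    ultimately have "emeasure (distr ?S ?S (\<lambda>w i. b i * w i)) (PiE UNIV A)
        = (\<Prod>i\<in>UNIV. emeasure steinhaus ((\<lambda>z. b i * z) -` A i \<inter> space steinhaus))"
      using A by (simp only: emeasure_distr[OF meas] sets_PiM_I_finite S.emeasure_PiM finite)
    also have "\<dots> = (\<Prod>i\<in>UNIV. emeasure (distr steinhaus borel (\<lambda>z. b i * z)) (A i))"
      by (intro prod.cong refl emeasure_distr[symmetric]) auto
    also have "\<dots> = (\<Prod>i\<in>UNIV. emeasure steinhaus (A i))"
      using b by (simp add: distr_steinhaus_mult)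
    finally show "emeasure (distr ?S ?S (\<lambda>w i. b i * w i)) (PiE UNIV A) = (\<Prod>i\<in>UNIV. emeasure steinhaus (A i))" .
  qed simp_all
qed

lemma nn_integral_steinhaus_vec_mult:
  fixes b :: "'n::finite \<Rightarrow> complex"
  assumes "\<And>i. cmod (b i) = 1" and "f \<in> borel_measurable steinhaus_vec"
  shows "(\<integral>\<^sup>+ w. f (\<lambda>i. b i * w i) \<partial>steinhaus_vec) = (\<integral>\<^sup>+ w. f w \<partial>steinhaus_vec)"
proof -
  have "(\<lambda>w i. b i * w i) \<in> steinhaus_vec \<rightarrow>\<^sub>M steinhaus_vec"
    by (rule measurable_PiM_single') (auto simp: space_PiM)
  then have "(\<integral>\<^sup>+ w. f (\<lambda>i. b i * w i) \<partial>steinhaus_vec) =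
      (\<integral>\<^sup>+ w. f w \<partial>distr steinhaus_vec steinhaus_vec (\<lambda>w i. b i * w i))"
    using assms(2) by (simp add: nn_integral_distr)
  also have "distr steinhaus_vec steinhaus_vec (\<lambda>w i. b i * w i) = steinhaus_vec"
    using assms(1) by (rule distr_steinhaus_vec_mult)
  finally show ?thesis .
qed

lemma nn_integral_sign_rotation:
  assumes "c\<^sup>2 + s\<^sup>2 = 1" "e \<in> sign_vectors" "f \<in> borel_measurable steinhaus_vec"
  shows "(\<integral>\<^sup>+ w. f (sign_rotation c s e w) \<partial>steinhaus_vec) = (\<integral>\<^sup>+ w. f w \<partial>steinhaus_vec)"
proof -
  have "cmod (rotation_factor c s (e i)) = 1" for i
    using assms(1,2) by (simp add: norm_rotation_factor sign_vectors_iff)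
  then show ?thesis
    unfolding sign_rotation_def using assms(3) by (rule nn_integral_steinhaus_vec_mult)
qed

lemma AE_steinhaus_vec_norm: "AE w in steinhaus_vec. \<forall>i. cmod (w i) = 1"
proof -
  have "AE w in steinhaus_vec. cmod (w i) = 1" for i
    by (rule AE_PiM_component[where I=UNIV, OF prob_space_steinhaus _ AE_steinhaus_norm]) simp
  then have "AE w in steinhaus_vec. \<forall>i\<in>UNIV. cmod (w i) = 1"
    by (intro AE_finite_allI) auto
  then show ?thesis
    by simp
qed

lemma AE_rademacher_vec_sign_vectors: "AE e in rademacher_vec. e \<in> sign_vectors"
proof -
  have sign: "AE z in rademacher. z \<in> {-1, 1}"
    unfolding rademacher_def by (rule AE_pmfI) simp
  have "AE e in rademacher_vec. e i \<in> {-1, 1}" for i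
    by (rule AE_PiM_component[where I=UNIV, OF prob_space_rademacher _ sign]) simp
  then have "AE e in rademacher_vec. \<forall>i\<in>UNIV. e i \<in> {-1, 1}"
    by (intro AE_finite_allI) auto
  then show ?thesis
    by (simp add: sign_vectors_iff)
qed

lemma emeasure_rademacher_vec_singleton:
  fixes e :: "'n::finite \<Rightarrow> complex"
  assumes "e \<in> sign_vectors"
  shows "emeasure rademacher_vec {e} = ennreal (1 / 2 ^ CARD('n))"
proof -
  interpret R: product_prob_space "\<lambda>_::'n. rademacher"
    by (intro product_prob_spaceI prob_space_rademacher)
  have "{e} = PiE UNIV (\<lambda>i. {e i})"
    by (auto simp: PiE_def Pi_def extensional_def)
  then have "emeasure rademacher_vec {e} = (\<Prod>i\<in>UNIV. emeasure rademacher {e i})"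
    by (simp add: R.emeasure_PiM)
  also have "\<dots> = (\<Prod>i\<in>(UNIV::'n set). ennreal (1 / 2))"
    using assms unfolding rademacher_def sign_vectors_iff
    by (intro prod.cong refl) (subst emeasure_pmf_single, auto simp: pmf_of_set)
  also have "\<dots> = ennreal ((1 / 2) ^ CARD('n))"
    by (subst prod_constant, subst ennreal_power) auto
  also have "\<dots> = ennreal (1 / 2 ^ CARD('n))"
    by (simp add: power_one_over)
  finally show ?thesis .
qed

lemma nn_integral_rademacher_vec:
  fixes f :: "('n::finite \<Rightarrow> complex) \<Rightarrow> ennreal"
  shows "(\<integral>\<^sup>+ e. f e \<partial>rademacher_vec) = (\<Sum>e\<in>sign_vectors. f e) * ennreal (1 / 2 ^ CARD('n))"
proof -
  have singleton: "{e} \<in> sets rademacher_vec" for e :: "'n \<Rightarrow> complex"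
  proof -
    have "{e} = PiE UNIV (\<lambda>i. {e i})"
      by (auto simp: PiE_def Pi_def extensional_def)
    then show ?thesis
      by (simp add: sets_PiM_I_finite)
  qed
  have "(\<integral>\<^sup>+ e. f e \<partial>rademacher_vec) = (\<integral>\<^sup>+ e. f e * indicator sign_vectors e \<partial>rademacher_vec)"
    using AE_rademacher_vec_sign_vectors by (intro nn_integral_cong_AE) (auto elim!: eventually_mono)
  also have "\<dots> = (\<Sum>e\<in>sign_vectors. f e * emeasure rademacher_vec {e})"
    by (rule nn_integral_indicator_finite[OF finite_sign_vectors singleton])
  also have "\<dots> = (\<Sum>e\<in>sign_vectors. f e) * ennreal (1 / 2 ^ CARD('n))"
    by (simp add: emeasure_rademacher_vec_singleton sum_distrib_right)
  finally show ?thesis .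
qed

lemma borel_measurable_rademacher_coordinate [measurable]:
  "(\<lambda>ew. fst ew i) \<in> borel_measurable (rademacher_vec \<Otimes>\<^sub>M N)"
proof (rule measurable_compose[of _ _ rademacher])
  show "(\<lambda>z. z) \<in> rademacher \<rightarrow>\<^sub>M borel"
    by (simp add: measurable_def)
qed measurable

lemma nn_integral_rademacher_steinhaus:
  fixes f :: "('n::finite \<Rightarrow> complex) \<Rightarrow> ('n \<Rightarrow> complex) \<Rightarrow> ennreal"
  assumes "(\<lambda>ew. f (fst ew) (snd ew)) \<in> borel_measurable (rademacher_vec \<Otimes>\<^sub>M steinhaus_vec)"
  shows "(\<integral>\<^sup>+ ew. f (fst ew) (snd ew) \<partial>(rademacher_vec \<Otimes>\<^sub>M steinhaus_vec)) =
    (\<Sum>e\<in>sign_vectors. \<integral>\<^sup>+ w. f e w \<partial>steinhaus_vec) * ennreal (1 / 2 ^ CARD('n))"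
proof -
  interpret S: prob_space "steinhaus_vec :: ('n \<Rightarrow> complex) measure"
    by (intro prob_space_PiM prob_space_steinhaus)
  show ?thesis
    using S.nn_integral_fst[OF assms] by (simp add: nn_integral_rademacher_vec)
qed

section \<open>The randomization inequality\<close>

lemma tetra_deriv_randomization_nn_integral:
  fixes x :: "'n::finite set \<Rightarrow> 'a::complex_banach"
  assumes "1 \<le> p" "0 \<le> c" "0 \<le> s" "c\<^sup>2 + s\<^sup>2 = 1"
  shows "ennreal ((s * c ^ (m - 1)) powr p) *
      (\<integral>\<^sup>+ w. norm (tetra_deriv m x w (\<lambda>i. lam i * w i)) powr p \<partial>steinhaus_vec)
    \<le> (\<integral>\<^sup>+ ew. norm (tetra_deriv m x (snd ew) (\<lambda>i. lam i * fst ew i * snd ew i)) powr p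
        \<partial>(rademacher_vec \<Otimes>\<^sub>M steinhaus_vec))"
proof -
  let ?F = "\<lambda>e w. ennreal (norm (tetra_deriv m x w (\<lambda>i. lam i * e i * w i)) powr p)"
  let ?K = "s * c ^ (m - 1)"
  have [measurable]: "(\<lambda>w. ?F e w) \<in> borel_measurable steinhaus_vec" for e
    by measurable
  have [measurable]: "(\<lambda>w. ?F e (sign_rotation c s e w)) \<in> borel_measurable steinhaus_vec" for e
    unfolding sign_rotation_def by measurable
  have "ennreal (?K powr p) * (\<integral>\<^sup>+ w. norm (tetra_deriv m x w (\<lambda>i. lam i * w i)) powr p \<partial>steinhaus_vec)
      = (\<integral>\<^sup>+ w. ennreal ((?K * norm (tetra_deriv m x w (\<lambda>i. lam i * w i))) powr p) \<partial>steinhaus_vec)"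
    using assms by (simp add: nn_integral_cmult[symmetric] ennreal_mult[symmetric] powr_mult)
  also have "\<dots> \<le> (\<integral>\<^sup>+ w. (\<Sum>e\<in>sign_vectors. ?F e (sign_rotation c s e w)) * ennreal (1 / 2 ^ CARD('n))
      \<partial>steinhaus_vec)"
  proof (rule nn_integral_mono)
    fix w :: "'n \<Rightarrow> complex"
    let ?a = "\<lambda>e. norm (tetra_deriv m x (sign_rotation c s e w)
      (\<lambda>i. lam i * e i * sign_rotation c s e w i)) powr p"
    have "ennreal ((?K * norm (tetra_deriv m x w (\<lambda>i. lam i * w i))) powr p) \<le>
        ennreal ((\<Sum>e\<in>sign_vectors. ?a e) * (1 / 2 ^ CARD('n)))"
      using tetra_deriv_powr_le_sign_average[OF assms(1,3,2)] by (intro ennreal_leI) simp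
    also have "\<dots> = ennreal (\<Sum>e\<in>sign_vectors. ?a e) * ennreal (1 / 2 ^ CARD('n))"
      by (rule ennreal_mult) (simp_all add: sum_nonneg)
    also have "ennreal (\<Sum>e\<in>sign_vectors. ?a e) = (\<Sum>e\<in>sign_vectors. ennreal (?a e))"
      by (rule sum_ennreal[symmetric]) simp
    finally show "ennreal ((?K * norm (tetra_deriv m x w (\<lambda>i. lam i * w i))) powr p) \<le>
        (\<Sum>e\<in>sign_vectors. ?F e (sign_rotation c s e w)) * ennreal (1 / 2 ^ CARD('n))" .
  qed
  also have "\<dots> = (\<integral>\<^sup>+ w. (\<Sum>e\<in>sign_vectors. ?F e (sign_rotation c s e w)) \<partial>steinhaus_vec) *
      ennreal (1 / 2 ^ CARD('n))"
    by (rule nn_integral_multc) measurable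
  also have "\<dots> = (\<Sum>e\<in>sign_vectors. \<integral>\<^sup>+ w. ?F e (sign_rotation c s e w) \<partial>steinhaus_vec) *
      ennreal (1 / 2 ^ CARD('n))"
    by (intro arg_cong2[where f="(*)"] nn_integral_sum refl) measurable
  also have "\<dots> = (\<Sum>e\<in>sign_vectors. \<integral>\<^sup>+ w. ?F e w \<partial>steinhaus_vec) * ennreal (1 / 2 ^ CARD('n))"
    using assms(4) by (intro arg_cong2[where f="(*)"] sum.cong refl nn_integral_sign_rotation) measurable
  also have "\<dots> = (\<integral>\<^sup>+ ew. ?F (fst ew) (snd ew) \<partial>(rademacher_vec \<Otimes>\<^sub>M steinhaus_vec))"
    by (rule nn_integral_rademacher_steinhaus[symmetric]) measurable
  finally show ?thesis .
qed

lemma nn_integral_tetra_deriv_finite: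
  fixes x :: "'n::finite set \<Rightarrow> 'a::complex_banach"
  assumes "0 \<le> p"
  shows "(\<integral>\<^sup>+ ew. norm (tetra_deriv m x (snd ew) (\<lambda>i. lam i * fst ew i * snd ew i)) powr p
      \<partial>(rademacher_vec \<Otimes>\<^sub>M steinhaus_vec)) < \<infinity>"
proof -
  interpret S: prob_space "steinhaus_vec :: ('n \<Rightarrow> complex) measure"
    by (intro prob_space_PiM prob_space_steinhaus)
  let ?F = "\<lambda>e w. ennreal (norm (tetra_deriv m x w (\<lambda>i. lam i * e i * w i)) powr p)"
  have "(\<integral>\<^sup>+ w. ?F e w \<partial>steinhaus_vec) < \<top>" for e
  proof -
    define B where "B = (\<Sum>A\<in>{A. card A = m}. (\<Sum>k\<in>A. cmod (lam k * e k)) * norm (x A))"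
    have "AE w in steinhaus_vec. ?F e w \<le> ennreal (B powr p)"
      using AE_steinhaus_vec_norm
    proof eventually_elim
      case (elim w)
      then have "norm (tetra_deriv m x w (\<lambda>i. lam i * e i * w i)) \<le> B"
        using norm_tetra_deriv_le[of w m x "\<lambda>i. lam i * e i * w i"] by (simp add: B_def norm_mult)
      then show ?case
        using assms by (intro ennreal_leI powr_mono2) auto
    qed
    then have "(\<integral>\<^sup>+ w. ?F e w \<partial>steinhaus_vec) \<le> (\<integral>\<^sup>+ w. ennreal (B powr p) \<partial>(steinhaus_vec :: ('n \<Rightarrow> complex) measure))"
      by (rule nn_integral_mono_AE)
    then have "(\<integral>\<^sup>+ w. ?F e w \<partial>steinhaus_vec) \<le> ennreal (B powr p)"
      by (simp add: S.emeasure_space_1)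
    then show ?thesis
      by (simp add: le_less_trans)
  qed
  then have "(\<Sum>e\<in>sign_vectors. \<integral>\<^sup>+ w. ?F e w \<partial>steinhaus_vec) < \<top>"
    by (simp add: finite_sign_vectors)
  then have "(\<Sum>e\<in>sign_vectors. \<integral>\<^sup>+ w. ?F e w \<partial>steinhaus_vec) * ennreal (1 / 2 ^ CARD('n)) < \<infinity>"
    by (simp add: ennreal_mult_less_top)
  then show ?thesis
    by (subst nn_integral_rademacher_steinhaus) measurable
qed

lemma integral_le_of_nn_integral_le:
  fixes f :: "'a \<Rightarrow> real" and g :: "'b \<Rightarrow> real"
  assumes le: "ennreal c * (\<integral>\<^sup>+ x. f x \<partial>M) \<le> (\<integral>\<^sup>+ y. g y \<partial>N)"
    and finite: "(\<integral>\<^sup>+ y. g y \<partial>N) < \<infinity>" and "0 \<le> c"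
    and [measurable]: "f \<in> borel_measurable M" "g \<in> borel_measurable N"
    and "\<And>x. 0 \<le> f x" "\<And>y. 0 \<le> g y"
  shows "c * integral\<^sup>L M f \<le> integral\<^sup>L N g"
proof -
  have "c * integral\<^sup>L M f = enn2real (ennreal c * (\<integral>\<^sup>+ x. f x \<partial>M))"
    using assms by (simp add: integral_eq_nn_integral enn2real_mult)
  also have "\<dots> \<le> enn2real (\<integral>\<^sup>+ y. g y \<partial>N)"
    using le finite by (intro enn2real_mono) auto
  also have "\<dots> = integral\<^sup>L N g"
    using assms by (simp add: integral_eq_nn_integral)
  finally show ?thesis .
qed

lemma mult_powr_inverse_le:
  fixes K L R p :: real
  assumes "0 < K" "0 \<le> L" "0 < p" "K powr p * L \<le> R"
  shows "K * L powr (1 / p) \<le> R powr (1 / p)"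
proof -
  have "K * L powr (1 / p) = (K powr p * L) powr (1 / p)"
    using assms by (simp add: powr_mult powr_powr)
  also have "\<dots> \<le> R powr (1 / p)"
    using assms by (intro powr_mono2) auto
  finally show ?thesis .
qed

lemma one_le_exp_mult_ratio_power: "1 \<le> exp 1 * (real k / real (Suc k)) ^ k"
proof -
  have "(real k / real (Suc k)) ^ k * (1 + 1 / real k) ^ k = 1"
  proof (cases "k = 0")
    case False
    then have "1 + 1 / real k = real (Suc k) / real k"
      by (simp add: field_simps)
    then show ?thesis
      using False by (simp flip: power_mult_distrib)
  qed simp
  moreover have "(1 + 1 / real k) ^ k \<le> exp 1"
    using exp_ge_one_plus_x_over_n_power_n[of k 1] by (cases "k = 0") auto
  ultimately show ?thesis
    by (metis mult_right_mono mult.commute zero_le_divide_iff of_nat_0_le_iff zero_le_power)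
qed

lemma tetra_deriv_randomization:
  fixes x :: "'n::finite set \<Rightarrow> 'a::complex_banach"
  assumes "1 \<le> m" "1 \<le> p"
  shows "(\<integral>w. norm (tetra_deriv m x w (\<lambda>i. lam i * w i)) powr p \<partial>steinhaus_vec) powr (1 / p)
    \<le> sqrt (exp 1 * real m) *
      (\<integral>ew. norm (tetra_deriv m x (snd ew) (\<lambda>i. lam i * fst ew i * snd ew i)) powr p
        \<partial>(rademacher_vec \<Otimes>\<^sub>M steinhaus_vec)) powr (1 / p)"
proof -
  let ?L = "\<integral>w. norm (tetra_deriv m x w (\<lambda>i. lam i * w i)) powr p \<partial>steinhaus_vec"
  let ?R = "\<integral>ew. norm (tetra_deriv m x (snd ew) (\<lambda>i. lam i * fst ew i * snd ew i)) powr p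
    \<partial>(rademacher_vec \<Otimes>\<^sub>M steinhaus_vec)"
  obtain k where m: "m = Suc k"
    using assms(1) by (cases m) auto
  \<comment> \<open>\<open>s\<^sup>2 = 1 / m\<close> maximises \<open>s * c ^ (m - 1)\<close> subject to \<open>c\<^sup>2 + s\<^sup>2 = 1\<close>\<close>
  define c where "c = sqrt (real k / real m)"
  define s where "s = 1 / sqrt (real m)"
  let ?K = "s * c ^ (m - 1)"
  have cs: "0 \<le> c" "0 \<le> s" "c\<^sup>2 + s\<^sup>2 = 1"
    by (auto simp: c_def s_def m power_divide field_simps)
  have K_pos: "0 < ?K"
    using m by (cases "k = 0") (auto simp: c_def s_def)
  have K_opt: "1 \<le> sqrt (exp 1 * real m) * ?K"
  proof -
    have "sqrt (exp 1 * real m) * ?K = sqrt (exp 1 * (real k / real (Suc k)) ^ k)"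
      by (simp add: c_def s_def m real_sqrt_mult real_sqrt_power)
    then show ?thesis
      using one_le_exp_mult_ratio_power[of k] by simp
  qed
  have "?K powr p * ?L \<le> ?R"
    using tetra_deriv_randomization_nn_integral[OF assms(2) cs, of m x lam]
      nn_integral_tetra_deriv_finite[of p m x lam] assms(2)
    by (intro integral_le_of_nn_integral_le) auto
  then have "?K * ?L powr (1 / p) \<le> ?R powr (1 / p)"
    using K_pos assms(2) by (intro mult_powr_inverse_le integral_nonneg_AE) auto
  then have "sqrt (exp 1 * real m) * (?K * ?L powr (1 / p)) \<le> sqrt (exp 1 * real m) * ?R powr (1 / p)"
    by (rule mult_left_mono) simp
  moreover have "?L powr (1 / p) \<le> sqrt (exp 1 * real m) * ?K * ?L powr (1 / p)"
    using K_opt by (simp add: mult_le_cancel_right1)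
  ultimately show ?thesis
    by (simp add: mult.assoc)
qed

lemma Lp_norm_divide:
  fixes f :: "'a \<Rightarrow> real"
  assumes "0 < c" "0 < p" "\<And>x. 0 \<le> f x"
  shows "(\<integral>x. (f x / c) powr p \<partial>M) powr (1 / p) = (\<integral>x. f x powr p \<partial>M) powr (1 / p) / c"
proof -
  have "(\<integral>x. (f x / c) powr p \<partial>M) = (\<integral>x. f x powr p \<partial>M) / c powr p"
    using assms by (simp add: powr_divide)
  moreover have "0 \<le> (\<integral>x. f x powr p \<partial>M)"
    by (simp add: integral_nonneg_AE)
  ultimately show ?thesis
    using assms by (simp add: powr_divide powr_powr)
qed

theorem lemma4p4:
  fixes x :: "'n::finite set \<Rightarrow> 'a::complex_banach"
    and M :: "(nat \<Rightarrow> ('n \<Rightarrow> complex)) \<Rightarrow> 'a"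
    and lam :: "'n \<Rightarrow> complex"
    and m :: nat and p :: real
  assumes "m \<ge> 1"
    and "sym_multilinear m M"
    and "\<forall>z. M (\<lambda>_. z) = tetra_poly m x z"
    and "1 \<le> p"
  shows "(\<integral>w. norm (M ((\<lambda>_. w)(0 := (\<lambda>i. lam i * w i)))) powr p
            \<partial>(PiM UNIV (\<lambda>_::'n. steinhaus))) powr (1 / p)
         \<le> sqrt (exp 1 * real m) *
           (\<integral>ew. norm (M ((\<lambda>_. snd ew)(0 := (\<lambda>i. lam i * fst ew i * snd ew i)))) powr p
            \<partial>(PiM UNIV (\<lambda>_::'n. rademacher) \<Otimes>\<^sub>M PiM UNIV (\<lambda>_::'n. steinhaus))) powr (1 / p)"
proof -
  have M_eq: "norm (M ((\<lambda>_. z)(0 := u))) = norm (tetra_deriv m x z u) / real m" for z u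
  proof -
    have "norm (tetra_deriv m x z u) = norm (of_nat m *\<^sub>C M ((\<lambda>_. z)(0 := u)))"
      by (simp only: sym_multilinear_tetra_deriv[OF assms(2,3)])
    also have "\<dots> = real m * norm (M ((\<lambda>_. z)(0 := u)))"
      by (simp add: norm_scaleC)
    finally show ?thesis
      using assms(1) by simp
  qed
  have "real m > 0"
    using assms(1) by simp
  then show ?thesis
    using tetra_deriv_randomization[OF assms(1,4), of x lam] assms(4)
    by (simp add: M_eq Lp_norm_divide divide_right_mono)
qed

end
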